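(* Let $\psi:[0,1]\to[0,1]$ be an increasing, differentiable, convex function. If $\psi(e^{-r/e})+\psi(re^{-r/e})\ge1$ for all $r\in[0,1]$, then $\psi(e^{-r/e})+\psi(re^{-r/e})\ge1$ for all $r\in[0,e]$. *)

theory Defs
  imports "HOL-Analysis.Analysis"
begin

end

theory Submission
  imports Defs
begin

(* For r in [1,e]
   we reflect r to its partner  s = r - e ln r,  which lies in [0,1] and satisfies
   exp (-s/e) = r exp (-r/e):  the map r |-> r exp(-r/e) is maximal at r = e, and s is the
   point of [0,e] on the other side of the maximum with the same value.  The hypothesis at s
   gives  psi (r exp(-r/e)) + psi (s r exp(-r/e)) >= 1,  and since  s r <= 1  the second
   argument is at most exp(-r/e), so monotonicity of psi yields the claim at r. *)

lemma exp_1_gt_5_div_2: "(5/2 :: real) < exp 1"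
  using e_approx_32 by (simp add: abs_if split: if_split_asm)

lemma ln_ge_pade:
  fixes r :: real
  assumes "1 \<le> r"
  shows "2 * (r - 1) / (r + 1) \<le> ln r"
proof (cases "r = 1")
  case False
  with assms have "2 * (r - 1) / (1 + r) \<le> ln r - ln 1"
    by (intro ln_inverse_approx_ge) auto
  then show ?thesis by (simp add: add.commute)
qed simp

text \<open>Bounding \<open>r\<^sup>2\<close> by its
  chord \<open>(1+e)r - e\<close> reduces this to \<open>e\<^sup>2 - 2e - 1 \<ge> 0\<close>, i.e. \<open>e \<ge> 1 + \<surd>2\<close>.\<close>

lemma square_le_two_e_mult:
  fixes r :: real
  assumes "1 \<le> r" "r \<le> exp 1"
  shows "(r + 1)\<^sup>2 \<le> 2 * exp 1 * r"
proof -
  have "(r - 1) * (exp 1 - r) \<ge> 0" using assms by simp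
  moreover have "(3 - exp 1) * r \<le> (3 - exp 1) * exp 1"
    using assms exp_le by (intro mult_left_mono) auto
  moreover have "(5/2 :: real) * (1/2) \<le> exp 1 * (exp 1 - 2)"
    using exp_1_gt_5_div_2 by (intro mult_mono) auto
  ultimately show ?thesis by (simp add: power2_eq_square algebra_simps)
qed

text \<open>Replacing \<open>ln r\<close> by its lower bound reduces it to \<open>(r-1)((r+1)\<^sup>2 - 2er) \<le> 0\<close>.\<close>

lemma mult_partner_le_1:
  fixes r :: real
  assumes "1 \<le> r" "r \<le> exp 1"
  shows "r * (r - exp 1 * ln r) \<le> 1"
proof -
  have "(r - 1) * (2 * exp 1 * r - (r + 1)\<^sup>2) \<ge> 0"
    using assms square_le_two_e_mult[OF assms] by simp
  then have "r * r - 1 \<le> exp 1 * r * (2 * (r - 1) / (r + 1))"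
    using assms by (simp add: field_simps power2_eq_square)
  also have "\<dots> \<le> exp 1 * r * ln r"
    using ln_ge_pade[OF assms(1)] assms by (intro mult_left_mono) auto
  finally show ?thesis by (simp add: algebra_simps)
qed

text \<open>The partner of \<open>r\<close>: the point with the same value of \<open>t \<mapsto> t exp(-t/e)\<close>
  on the other side of the maximum at \<open>t = e\<close>.\<close>

definition partner :: "real \<Rightarrow> real" where
  "partner r = r - exp 1 * ln r"

lemma exp_partner:
  fixes r :: real
  assumes "0 < r"
  shows "exp (- partner r / exp 1) = r * exp (- r / exp 1)"
proof -
  have "- partner r / exp 1 = ln r + (- r / exp 1)"
    by (simp add: partner_def field_simps)
  then have "exp (- partner r / exp 1) = exp (ln r) * exp (- r / exp 1)"
    by (simp only: exp_add)
  then show ?thesis using assms by simp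
qed

text \<open>The partner of a point of \<open>[1,e]\<close> lies in \<open>[0,1]\<close>: the lower bound is \<open>ln x \<le> x - 1\<close>
  at \<open>x = r/e\<close>, the upper bound is \<open>ln r \<ge> 1 - 1/r\<close>.\<close>

lemma partner_in_unit_interval:
  fixes r :: real
  assumes "1 \<le> r" "r \<le> exp 1"
  shows "partner r \<in> {0..1}"
proof -
  have "ln r - 1 \<le> r / exp 1 - 1"
    using ln_le_minus_one[of "r / exp 1"] assms by (simp add: ln_div)
  then have "0 \<le> partner r"
    by (simp add: partner_def field_simps)
  have "(r - 1) * (exp 1 - r) \<ge> 0" using assms by simp
  then have "r - 1 \<le> exp 1 * ((r - 1) / r)"
    using assms by (simp add: field_simps)
  also have "\<dots> \<le> exp 1 * ln r"
    using ln_add1_ge[of "r - 1"] assms by (intro mult_left_mono) auto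
  finally have "partner r \<le> 1" by (simp add: partner_def)
  with \<open>0 \<le> partner r\<close> show ?thesis by simp
qed

lemma partner_mult_le:
  fixes r :: real
  assumes "1 \<le> r" "r \<le> exp 1"
  shows "partner r * (r * exp (- r / exp 1)) \<le> exp (- r / exp 1)"
proof -
  have "partner r * r \<le> 1"
    using mult_partner_le_1[OF assms] by (simp add: partner_def mult.commute)
  from mult_right_mono[OF this, of "exp (- r / exp 1)"] show ?thesis
    by (simp add: mult.assoc)
qed

theorem lemma5p4:
  fixes \<psi> :: "real \<Rightarrow> real"
  assumes range: "\<forall>x\<in>{0..1}. \<psi> x \<in> {0..1}"
    and incr: "mono_on {0..1} \<psi>"
    and diff: "\<psi> differentiable_on {0..1}"
    and cvx: "convex_on {0..1} \<psi>"
    and hyp: "\<forall>r\<in>{0..1}. \<psi> (exp (- r / exp 1)) + \<psi> (r * exp (- r / exp 1)) \<ge> 1"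
  shows "\<forall>r\<in>{0..exp 1}. \<psi> (exp (- r / exp 1)) + \<psi> (r * exp (- r / exp 1)) \<ge> 1"
proof
  fix r :: real assume r: "r \<in> {0..exp 1}"
  define a where "a = exp (- r / exp 1)"
  define b where "b = r * exp (- r / exp 1)"
  show "\<psi> a + \<psi> b \<ge> 1"
  proof (cases "r \<le> 1")
    case True then show ?thesis using hyp r by (auto simp: a_def b_def)
  next
    case False
    then have r1: "1 \<le> r" "r \<le> exp 1" using r by auto
    define s where "s = partner r"
    have s: "s \<in> {0..1}" using partner_in_unit_interval[OF r1] by (simp add: s_def)
    have b: "exp (- s / exp 1) = b" using exp_partner r1 by (simp add: s_def b_def)
    have "\<psi> b + \<psi> (s * b) \<ge> 1" using hyp s b by force
    moreover have "\<psi> (s * b) \<le> \<psi> a"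
    proof (rule mono_onD[OF incr])
      show "s * b \<le> a" using partner_mult_le[OF r1] by (simp add: s_def a_def b_def)
      moreover show "a \<in> {0..1}" using r1 by (simp add: a_def)
      moreover have "0 \<le> s * b" using s r1 by (simp add: b_def)
      ultimately show "s * b \<in> {0..1}" by simp
    qed
    ultimately show ?thesis by linarith
  qed
qed

end
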